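(* Let $\Gamma$ be a symmetric bimatrix game. If $\Gamma$ has a Nash equilibrium that is not symmetric, i.e., $\mathrm{Nash}_{\mathrm{sym}}(\Gamma)\subsetneq\mathrm{Nash}(\Gamma)$, then $\mathrm{XE}_{\mathrm{sym}}(\Gamma)\subsetneq\mathrm{CE}_{\mathrm{sym}}(\Gamma)$.
   Context: A symmetric bimatrix game: two players with the same finite strategy set $C_1$ ($|C_1|=m\ge2$) and utilities with $u_1(s_1,s_2)=u_2(s_2,s_1)$. $\mathrm{Nash}(\Gamma)$ is the set of mixed Nash equilibria $(\pi_1,\pi_2)$; $\mathrm{Nash}_{\mathrm{sym}}(\Gamma)$ those with $\pi_1=\pi_2$. Distributions on $C_1\times C_1$ are $m\times m$ nonnegative matrices summing to one. A correlated equilibrium is a distribution $\pi$ such that for each player $i$ and all $s_i,t_i$, $\sum_{s_{-i}}[u_i(t_i,s_{-i})-u_i(s)]\pi(s)\le0$. $\mathrm{CE}_{\mathrm{sym}}(\Gamma)$ is the set of correlated equilibria that are symmetric matrices, and $\mathrm{XE}_{\mathrm{sym}}(\Gamma)$ (exchangeable equilibria) is the set of correlated equilibria lying in $\mathrm{conv}\{xx^T:x\text{ a probability vector on }C_1\}$. *)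

theory Defs
  imports "HOL-Analysis.Analysis"
begin

text \<open>Strategy set C1 is the finite type 'n (m = CARD('n)).  Utilities are
  u1 u2 :: 'n \<Rightarrow> 'n \<Rightarrow> real, with ui s1 s2 the payoff of player i at
  profile (s1,s2).  Mixed strategies are vectors in real^'n, distributions on
  C1 x C1 are m x m matrices real^'n^'n (row = player 1, column = player 2).\<close>

definition symmetric_game :: "('n \<Rightarrow> 'n \<Rightarrow> real) \<Rightarrow> ('n \<Rightarrow> 'n \<Rightarrow> real) \<Rightarrow> bool" where
  "symmetric_game u1 u2 \<longleftrightarrow> (\<forall>s1 s2. u1 s1 s2 = u2 s2 s1)"

definition prob_vec :: "real ^ 'n::finite \<Rightarrow> bool" where
  "prob_vec x \<longleftrightarrow> (\<forall>i. 0 \<le> x $ i) \<and> (\<Sum>i\<in>UNIV. x $ i) = 1"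

definition prob_mat :: "real ^ 'n::finite ^ 'n \<Rightarrow> bool" where
  "prob_mat P \<longleftrightarrow> (\<forall>i j. 0 \<le> P $ i $ j) \<and> (\<Sum>i\<in>UNIV. \<Sum>j\<in>UNIV. P $ i $ j) = 1"

definition Nash :: "('n::finite \<Rightarrow> 'n \<Rightarrow> real) \<Rightarrow> ('n \<Rightarrow> 'n \<Rightarrow> real) \<Rightarrow> ((real ^ 'n) \<times> (real ^ 'n)) set" where
  "Nash u1 u2 = {(p, q) | p q. prob_vec p \<and> prob_vec q \<and>
     (\<forall>t. (\<Sum>s2\<in>UNIV. q $ s2 * u1 t s2) \<le> (\<Sum>s1\<in>UNIV. \<Sum>s2\<in>UNIV. p $ s1 * q $ s2 * u1 s1 s2)) \<and>
     (\<forall>t. (\<Sum>s1\<in>UNIV. p $ s1 * u2 s1 t) \<le> (\<Sum>s1\<in>UNIV. \<Sum>s2\<in>UNIV. p $ s1 * q $ s2 * u2 s1 s2))}"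

definition Nash_sym :: "('n::finite \<Rightarrow> 'n \<Rightarrow> real) \<Rightarrow> ('n \<Rightarrow> 'n \<Rightarrow> real) \<Rightarrow> ((real ^ 'n) \<times> (real ^ 'n)) set" where
  "Nash_sym u1 u2 = {(p, q) | p q. (p, q) \<in> Nash u1 u2 \<and> p = q}"

definition CE :: "('n::finite \<Rightarrow> 'n \<Rightarrow> real) \<Rightarrow> ('n \<Rightarrow> 'n \<Rightarrow> real) \<Rightarrow> (real ^ 'n ^ 'n) set" where
  "CE u1 u2 = {P. prob_mat P \<and>
     (\<forall>s t. (\<Sum>s2\<in>UNIV. (u1 t s2 - u1 s s2) * P $ s $ s2) \<le> 0) \<and>
     (\<forall>s t. (\<Sum>s1\<in>UNIV. (u2 s1 t - u2 s1 s) * P $ s1 $ s) \<le> 0)}"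

definition CE_sym :: "('n::finite \<Rightarrow> 'n \<Rightarrow> real) \<Rightarrow> ('n \<Rightarrow> 'n \<Rightarrow> real) \<Rightarrow> (real ^ 'n ^ 'n) set" where
  "CE_sym u1 u2 = {P \<in> CE u1 u2. transpose P = P}"

definition outer_self :: "real ^ 'n::finite \<Rightarrow> real ^ 'n ^ 'n" where
  "outer_self x = (\<chi> i j. x $ i * x $ j)"

definition XE_sym :: "('n::finite \<Rightarrow> 'n \<Rightarrow> real) \<Rightarrow> ('n \<Rightarrow> 'n \<Rightarrow> real) \<Rightarrow> (real ^ 'n ^ 'n) set" where
  "XE_sym u1 u2 = CE u1 u2 \<inter> convex hull {outer_self x | x. prob_vec x}"

end

theory Submission
  imports Defs
begin

text \<open>If \<open>(p, q)\<close> is a Nash equilibrium with \<open>p \<noteq> q\<close>, symmetry of the game makes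
  \<open>(q, p)\<close> one as well, and product distributions of Nash equilibria are correlated
  equilibria.  Hence the symmetrised product \<open>(p q\<^sup>T + q p\<^sup>T) / 2\<close> is a symmetric correlated
  equilibrium.  Every matrix in the convex hull of the \<open>x x\<^sup>T\<close> is positive semidefinite,
  but the quadratic form of the symmetrised product at \<open>v\<close> is \<open>(v \<bullet> p) (v \<bullet> q)\<close>, which is
  negative for a suitable \<open>v\<close> because \<open>p\<close> and \<open>q\<close> are distinct probability vectors.\<close>

definition product_dist :: "real ^ 'n::finite \<Rightarrow> real ^ 'n \<Rightarrow> real ^ 'n ^ 'n" where
  "product_dist p q = (\<chi> i j. p $ i * q $ j)"

definition symmetrised_product :: "real ^ 'n::finite \<Rightarrow> real ^ 'n \<Rightarrow> real ^ 'n ^ 'n" where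
  "symmetrised_product p q = (1/2) *\<^sub>R product_dist p q + (1/2) *\<^sub>R product_dist q p"

definition quad_form :: "('n::finite \<Rightarrow> real) \<Rightarrow> real ^ 'n ^ 'n \<Rightarrow> real" where
  "quad_form v M = (\<Sum>i\<in>UNIV. \<Sum>j\<in>UNIV. v i * v j * M $ i $ j)"

lemma best_response_support:
  fixes x w :: "'n::finite \<Rightarrow> real"
  assumes nonneg: "\<And>i. 0 \<le> x i" and sum_one: "(\<Sum>i\<in>UNIV. x i) = 1"
    and best: "\<And>t. w t \<le> (\<Sum>i\<in>UNIV. x i * w i)"
  shows "x s * (w t - w s) \<le> 0"
proof -
  define V where "V = (\<Sum>i\<in>UNIV. x i * w i)"
  have "(\<Sum>i\<in>UNIV. x i * (V - w i)) = V * (\<Sum>i\<in>UNIV. x i) - (\<Sum>i\<in>UNIV. x i * w i)"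
    by (simp add: algebra_simps sum_subtractf sum_distrib_left)
  also have "\<dots> = 0" using sum_one V_def by simp
  finally have "(\<Sum>i\<in>UNIV. x i * (V - w i)) = 0" .
  moreover have "\<forall>i\<in>UNIV. 0 \<le> x i * (V - w i)" using nonneg best V_def by auto
  ultimately have "x s * (V - w s) = 0" by (simp add: sum_nonneg_eq_0_iff)
  moreover have "x s * (w t - V) \<le> 0"
    using nonneg[of s] best[of t] V_def by (simp add: mult_nonneg_nonpos)
  moreover have "x s * (w t - w s) = x s * (w t - V) + x s * (V - w s)"
    by (simp add: algebra_simps)
  ultimately show ?thesis by linarith
qed

lemma product_dist_in_CE:
  assumes "(p, q) \<in> Nash u1 u2"
  shows "product_dist p q \<in> CE u1 u2"
proof -
  from assms have p: "prob_vec p" and q: "prob_vec q"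
    and best1: "\<And>t. (\<Sum>s2\<in>UNIV. q $ s2 * u1 t s2) \<le> (\<Sum>s1\<in>UNIV. \<Sum>s2\<in>UNIV. p $ s1 * q $ s2 * u1 s1 s2)"
    and best2: "\<And>t. (\<Sum>s1\<in>UNIV. p $ s1 * u2 s1 t) \<le> (\<Sum>s1\<in>UNIV. \<Sum>s2\<in>UNIV. p $ s1 * q $ s2 * u2 s1 s2)"
    unfolding Nash_def by auto
  have "prob_mat (product_dist p q)"
    using p q by (simp add: prob_mat_def prob_vec_def product_dist_def sum_product[symmetric])
  moreover have "(\<Sum>s2\<in>UNIV. (u1 t s2 - u1 s s2) * product_dist p q $ s $ s2) \<le> 0" for s t
  proof -
    define w where "w t = (\<Sum>s2\<in>UNIV. q $ s2 * u1 t s2)" for t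
    have "\<And>t. w t \<le> (\<Sum>i\<in>UNIV. p $ i * w i)"
      using best1 unfolding w_def by (simp add: sum_distrib_left mult.assoc)
    with p have "p $ s * (w t - w s) \<le> 0"
      unfolding prob_vec_def by (intro best_response_support) auto
    then show ?thesis
      unfolding w_def product_dist_def by (simp add: algebra_simps sum_subtractf sum_distrib_left)
  qed
  moreover have "(\<Sum>s1\<in>UNIV. (u2 s1 t - u2 s1 s) * product_dist p q $ s1 $ s) \<le> 0" for s t
  proof -
    define w where "w t = (\<Sum>s1\<in>UNIV. p $ s1 * u2 s1 t)" for t
    have "(\<Sum>s1\<in>UNIV. \<Sum>s2\<in>UNIV. p $ s1 * q $ s2 * u2 s1 s2) = (\<Sum>i\<in>UNIV. q $ i * w i)"
      unfolding w_def by (subst sum.swap) (simp add: sum_distrib_left algebra_simps)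
    with best2 have "\<And>t. w t \<le> (\<Sum>i\<in>UNIV. q $ i * w i)" unfolding w_def by metis
    with q have "q $ s * (w t - w s) \<le> 0"
      unfolding prob_vec_def by (intro best_response_support) auto
    then show ?thesis
      unfolding w_def product_dist_def by (simp add: algebra_simps sum_subtractf sum_distrib_left)
  qed
  ultimately show ?thesis unfolding CE_def by blast
qed

lemma convex_CE:
  fixes u1 u2 :: "'n::finite \<Rightarrow> 'n \<Rightarrow> real"
  shows "convex (CE u1 u2)"
proof (rule convexI)
  fix P Q :: "real ^ 'n ^ 'n" and a b :: real
  assume P: "P \<in> CE u1 u2" and Q: "Q \<in> CE u1 u2" and ab: "0 \<le> a" "0 \<le> b" "a + b = 1"
  let ?R = "a *\<^sub>R P + b *\<^sub>R Q"
  have "prob_mat ?R"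
    using P Q ab unfolding CE_def prob_mat_def
    by (simp add: sum.distrib sum_distrib_left[symmetric])
  moreover have "(\<Sum>s2\<in>UNIV. (u1 t s2 - u1 s s2) * ?R $ s $ s2) \<le> 0" for s t
  proof -
    have "(\<Sum>s2\<in>UNIV. (u1 t s2 - u1 s s2) * ?R $ s $ s2)
        = a * (\<Sum>s2\<in>UNIV. (u1 t s2 - u1 s s2) * P $ s $ s2)
          + b * (\<Sum>s2\<in>UNIV. (u1 t s2 - u1 s s2) * Q $ s $ s2)"
      unfolding sum_distrib_left sum.distrib[symmetric] by (rule sum.cong) (simp_all add: algebra_simps)
    with P Q ab show ?thesis
      unfolding CE_def by (auto intro!: add_nonpos_nonpos mult_nonneg_nonpos)
  qed
  moreover have "(\<Sum>s1\<in>UNIV. (u2 s1 t - u2 s1 s) * ?R $ s1 $ s) \<le> 0" for s t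
  proof -
    have "(\<Sum>s1\<in>UNIV. (u2 s1 t - u2 s1 s) * ?R $ s1 $ s)
        = a * (\<Sum>s1\<in>UNIV. (u2 s1 t - u2 s1 s) * P $ s1 $ s)
          + b * (\<Sum>s1\<in>UNIV. (u2 s1 t - u2 s1 s) * Q $ s1 $ s)"
      unfolding sum_distrib_left sum.distrib[symmetric] by (rule sum.cong) (simp_all add: algebra_simps)
    with P Q ab show ?thesis
      unfolding CE_def by (auto intro!: add_nonpos_nonpos mult_nonneg_nonpos)
  qed
  ultimately show "?R \<in> CE u1 u2" unfolding CE_def by blast
qed

lemma Nash_swap:
  assumes "symmetric_game u1 u2" "(p, q) \<in> Nash u1 u2"
  shows "(q, p) \<in> Nash u1 u2"
proof -
  have u: "\<And>a b. u1 a b = u2 b a" using assms(1) unfolding symmetric_game_def by auto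
  have "(\<Sum>s1\<in>UNIV. \<Sum>s2\<in>UNIV. q $ s1 * p $ s2 * u1 s1 s2)
      = (\<Sum>s1\<in>UNIV. \<Sum>s2\<in>UNIV. p $ s1 * q $ s2 * u2 s1 s2)"
    "(\<Sum>s1\<in>UNIV. \<Sum>s2\<in>UNIV. q $ s1 * p $ s2 * u2 s1 s2)
      = (\<Sum>s1\<in>UNIV. \<Sum>s2\<in>UNIV. p $ s1 * q $ s2 * u1 s1 s2)"
    by (subst sum.swap, simp add: u algebra_simps)+
  with assms(2) show ?thesis unfolding Nash_def by (auto simp: u)
qed

lemma prob_vec_exists_greater:
  assumes "prob_vec p" "prob_vec q" "p \<noteq> q"
  shows "\<exists>i. q $ i < p $ i"
proof (rule ccontr)
  assume "\<not> ?thesis"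
  then have le: "\<And>i. p $ i \<le> q $ i" by (simp add: not_less)
  from assms(3) obtain k where "p $ k \<noteq> q $ k" by (auto simp: vec_eq_iff)
  with le[of k] have "p $ k < q $ k" by simp
  with le have "(\<Sum>i\<in>UNIV. p $ i) < (\<Sum>i\<in>UNIV. q $ i)"
    using sum_strict_mono_ex1[of UNIV "\<lambda>i. p $ i" "\<lambda>i. q $ i"] by auto
  with assms(1,2) show False unfolding prob_vec_def by simp
qed

lemma transpose_eq_hull_outer_self:
  assumes "M \<in> convex hull range outer_self"
  shows "transpose M = M"
proof -
  have "convex hull range outer_self \<subseteq> {M :: real ^ 'n::finite ^ 'n. transpose M = M}"
  proof (rule hull_minimal)
    show "range outer_self \<subseteq> {M :: real ^ 'n ^ 'n. transpose M = M}"
      by (auto simp: vec_eq_iff transpose_def outer_self_def)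
    show "convex {M :: real ^ 'n ^ 'n. transpose M = M}"
      by (rule convexI) (simp add: vec_eq_iff transpose_def)
  qed
  with assms show ?thesis by blast
qed

lemma quad_form_add_scaleR:
  "quad_form v (a *\<^sub>R M + b *\<^sub>R N) = a * quad_form v M + b * quad_form v N"
  unfolding quad_form_def sum_distrib_left sum.distrib[symmetric]
  by (intro sum.cong refl) (simp add: algebra_simps)

lemma quad_form_outer_self: "quad_form v (outer_self x) = (\<Sum>i\<in>UNIV. v i * x $ i)\<^sup>2"
  unfolding quad_form_def outer_self_def power2_eq_square sum_product
  by (intro sum.cong refl) (simp add: algebra_simps)

lemma quad_form_nonneg_hull_outer_self:
  assumes "M \<in> convex hull range outer_self"
  shows "0 \<le> quad_form v M"
proof -
  have "convex hull range outer_self \<subseteq> {M. 0 \<le> quad_form v M}"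
  proof (rule hull_minimal)
    show "range outer_self \<subseteq> {M. 0 \<le> quad_form v M}"
      by (auto simp: quad_form_outer_self)
    show "convex {M. 0 \<le> quad_form v M}"
      by (rule convexI) (simp add: quad_form_add_scaleR)
  qed
  with assms show ?thesis by blast
qed

lemma XE_sym_subset_hull_outer_self: "XE_sym u1 u2 \<subseteq> convex hull range outer_self"
proof -
  have "convex hull {outer_self x | x. prob_vec x} \<subseteq> convex hull range outer_self"
    by (rule hull_mono) auto
  then show ?thesis unfolding XE_sym_def by blast
qed

lemma XE_sym_subset_CE_sym: "XE_sym u1 u2 \<subseteq> CE_sym u1 u2"
  using XE_sym_subset_hull_outer_self transpose_eq_hull_outer_self
  unfolding XE_sym_def CE_sym_def by blast

lemma quad_form_symmetrised_product:
  fixes p q :: "real ^ 'n::finite"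
  shows "quad_form v (symmetrised_product p q)
    = (\<Sum>k\<in>UNIV. v k * p $ k) * (\<Sum>k\<in>UNIV. v k * q $ k)"
proof -
  have "quad_form v (product_dist p q) = (\<Sum>k\<in>UNIV. v k * p $ k) * (\<Sum>k\<in>UNIV. v k * q $ k)"
    for p q :: "real ^ 'n"
    unfolding quad_form_def product_dist_def sum_product by (simp add: algebra_simps)
  then show ?thesis by (simp add: symmetrised_product_def quad_form_add_scaleR algebra_simps)
qed

lemma prob_vec_separating_weights:
  fixes p q :: "real ^ 'n::finite"
  assumes p: "prob_vec p" and q: "prob_vec q" and "p \<noteq> q"
  obtains v where "(\<Sum>k\<in>UNIV. v k * p $ k) * (\<Sum>k\<in>UNIV. v k * q $ k) < 0"
proof -
  obtain i j where i: "q $ i < p $ i" and j: "p $ j < q $ j"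
    using prob_vec_exists_greater assms by metis
  then have "i \<noteq> j" by auto
  have nonneg: "0 \<le> p $ k" "0 \<le> q $ k" for k using p q unfolding prob_vec_def by auto
  define D where "D = p $ i * q $ j - q $ i * p $ j"
  have "q $ i * p $ j \<le> p $ i * p $ j" using i nonneg by (simp add: mult_right_mono)
  also have "\<dots> < p $ i * q $ j" using i j nonneg[of i] by (simp add: mult_strict_left_mono)
  finally have "D \<noteq> 0" unfolding D_def by simp
  \<comment> \<open>chosen so that \<open>v \<bullet> p = D\<close> and \<open>v \<bullet> q = -D\<close>\<close>
  define v where "v k = (if k = i then p $ j + q $ j else 0) - (if k = j then p $ i + q $ i else 0)" for k
  have dot: "(\<Sum>k\<in>UNIV. v k * r $ k) = (p $ j + q $ j) * r $ i - (p $ i + q $ i) * r $ j" for r :: "real ^ 'n"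
  proof -
    have "(\<Sum>k\<in>UNIV. v k * r $ k) = (\<Sum>k\<in>UNIV. (if k = i then (p $ j + q $ j) * r $ k else 0)
        - (if k = j then (p $ i + q $ i) * r $ k else 0))"
      using \<open>i \<noteq> j\<close> by (intro sum.cong) (auto simp: v_def algebra_simps)
    then show ?thesis by (simp add: sum_subtractf)
  qed
  have "(\<Sum>k\<in>UNIV. v k * p $ k) * (\<Sum>k\<in>UNIV. v k * q $ k) = - D\<^sup>2"
    unfolding dot D_def by (simp add: algebra_simps power2_eq_square)
  also have "\<dots> < 0" using \<open>D \<noteq> 0\<close> by simp
  finally show ?thesis by (rule that)
qed

lemma symmetrised_product_in_CE_sym:
  assumes "(p, q) \<in> Nash u1 u2" and "(q, p) \<in> Nash u1 u2"
  shows "symmetrised_product p q \<in> CE_sym u1 u2"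
proof -
  have "symmetrised_product p q \<in> CE u1 u2"
    unfolding symmetrised_product_def using assms[THEN product_dist_in_CE]
    by (intro convexD[OF convex_CE]) auto
  moreover have "transpose (symmetrised_product p q) = symmetrised_product p q"
    unfolding symmetrised_product_def product_dist_def
    by (simp add: vec_eq_iff transpose_def algebra_simps)
  ultimately show ?thesis unfolding CE_sym_def by blast
qed

lemma symmetrised_product_notin_hull_outer_self:
  assumes "prob_vec p" "prob_vec q" "p \<noteq> q"
  shows "symmetrised_product p q \<notin> convex hull range outer_self"
proof
  assume "symmetrised_product p q \<in> convex hull range outer_self"
  then have "0 \<le> quad_form v (symmetrised_product p q)" for v
    by (rule quad_form_nonneg_hull_outer_self)
  moreover obtain v where "quad_form v (symmetrised_product p q) < 0"
    using assms unfolding quad_form_symmetrised_product by (rule prob_vec_separating_weights)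
  ultimately show False by (simp add: not_le[symmetric])
qed

theorem theorem3p5:
  fixes u1 u2 :: "'n::finite \<Rightarrow> 'n \<Rightarrow> real"
  assumes "CARD('n) \<ge> 2"
    and "symmetric_game u1 u2"
    and "Nash_sym u1 u2 \<subset> Nash u1 u2"
  shows "XE_sym u1 u2 \<subset> CE_sym u1 u2"
proof -
  from assms(3) obtain p q where pq: "(p, q) \<in> Nash u1 u2" and "p \<noteq> q"
    unfolding Nash_sym_def by auto
  then have "prob_vec p" "prob_vec q" unfolding Nash_def by auto
  have "symmetrised_product p q \<in> CE_sym u1 u2"
    using pq Nash_swap[OF assms(2) pq] by (rule symmetrised_product_in_CE_sym)
  moreover have "symmetrised_product p q \<notin> XE_sym u1 u2"
    using symmetrised_product_notin_hull_outer_self[OF \<open>prob_vec p\<close> \<open>prob_vec q\<close> \<open>p \<noteq> q\<close>]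
      XE_sym_subset_hull_outer_self by blast
  ultimately show ?thesis using XE_sym_subset_CE_sym by blast
qed

end
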